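(* Let $X$ be a set and $\{X_i\}_{i\in I}$ a family of subsets of $X$. Let $Y$ be the simplicial graph with vertex set $X$ in which two distinct points are adjacent iff some $X_i$ contains both. Suppose that (1) $Y$ has no infinite cliques; (2) any finite pairwise intersecting subfamily of $\{X_i\}$ has nonempty intersection; (3) for any pairwise intersecting $X_{i_1},X_{i_2},X_{i_3}$ there exists $X_{i_0}$ in the family with $(X_{i_1}\cap X_{i_2})\cup(X_{i_2}\cap X_{i_3})\cup(X_{i_3}\cap X_{i_1})\subseteq X_{i_0}$. Then $Y$ is finitely clique Helly.
   Context: A graph is finitely clique Helly if every finite pairwise intersecting family of maximal cliques (viewed as vertex sets) has nonempty intersection. *)

theory Defs
  imports Main
begin

definition is_clique :: "'a set \<Rightarrow> ('a \<Rightarrow> 'a \<Rightarrow> bool) \<Rightarrow> 'a set \<Rightarrow> bool" where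
  "is_clique V E C \<longleftrightarrow> C \<subseteq> V \<and> (\<forall>x\<in>C. \<forall>y\<in>C. x \<noteq> y \<longrightarrow> E x y)"

definition is_maximal_clique :: "'a set \<Rightarrow> ('a \<Rightarrow> 'a \<Rightarrow> bool) \<Rightarrow> 'a set \<Rightarrow> bool" where
  "is_maximal_clique V E C \<longleftrightarrow> is_clique V E C \<and> (\<forall>D. is_clique V E D \<and> C \<subseteq> D \<longrightarrow> D = C)"

definition finitely_clique_Helly :: "'a set \<Rightarrow> ('a \<Rightarrow> 'a \<Rightarrow> bool) \<Rightarrow> bool" where
  "finitely_clique_Helly V E \<longleftrightarrow>
     (\<forall>F. finite F \<and> (\<forall>C\<in>F. is_maximal_clique V E C)
          \<and> (\<forall>C\<in>F. \<forall>D\<in>F. C \<inter> D \<noteq> {}) \<longrightarrow> \<Inter>F \<noteq> {})"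

definition family_adj :: "'i set \<Rightarrow> ('i \<Rightarrow> 'a set) \<Rightarrow> 'a \<Rightarrow> 'a \<Rightarrow> bool" where
  "family_adj I Xs x y \<longleftrightarrow> x \<noteq> y \<and> (\<exists>i\<in>I. x \<in> Xs i \<and> y \<in> Xs i)"

end

theory Submission
  imports Defs
begin

text \<open>Every finite clique with at least two vertices lies in a single member of the family, by
  induction on its size: for three of its points x1, x2, x3 the clique minus xj lies in a member Aj;
  these members meet pairwise (A1 and A2 both contain x3, and so on) and their pairwise intersections
  cover the clique, so the member given by condition (3) contains it. As members are cliques, a
  maximal clique is thus either a member or a singleton. A singleton in a pairwise intersecting
  family lies in every other clique of it; a family of members only is handled by condition (2).\<close>

definition triangle_condition :: "'i set \<Rightarrow> ('i \<Rightarrow> 'a set) \<Rightarrow> bool" where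
  "triangle_condition I Xs \<longleftrightarrow> (\<forall>i1\<in>I. \<forall>i2\<in>I. \<forall>i3\<in>I.
     Xs i1 \<inter> Xs i2 \<noteq> {} \<and> Xs i2 \<inter> Xs i3 \<noteq> {} \<and> Xs i3 \<inter> Xs i1 \<noteq> {}
     \<longrightarrow> (\<exists>i0\<in>I. (Xs i1 \<inter> Xs i2) \<union> (Xs i2 \<inter> Xs i3) \<union> (Xs i3 \<inter> Xs i1) \<subseteq> Xs i0))"

lemma is_clique_subset: "is_clique V E K \<Longrightarrow> L \<subseteq> K \<Longrightarrow> is_clique V E L"
  unfolding is_clique_def by blast

lemma is_clique_member:
  assumes "Xs i \<subseteq> X" "i \<in> I"
  shows "is_clique X (family_adj I Xs) (Xs i)"
  using assms unfolding is_clique_def family_adj_def by blast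

lemma member_cover_from_three_deletions:
  assumes tri: "triangle_condition I Xs"
    and x: "x1 \<in> K" "x2 \<in> K" "x3 \<in> K" "x1 \<noteq> x2" "x1 \<noteq> x3" "x2 \<noteq> x3"
    and a: "a \<in> I" "K - {x1} \<subseteq> Xs a"
    and b: "b \<in> I" "K - {x2} \<subseteq> Xs b"
    and c: "c \<in> I" "K - {x3} \<subseteq> Xs c"
  shows "\<exists>i\<in>I. K \<subseteq> Xs i"
proof -
  have "x3 \<in> Xs a \<inter> Xs b" "x1 \<in> Xs b \<inter> Xs c" "x2 \<in> Xs c \<inter> Xs a"
    using x a b c by blast+
  then obtain i0 where i0: "i0 \<in> I" "(Xs a \<inter> Xs b) \<union> (Xs b \<inter> Xs c) \<union> (Xs c \<inter> Xs a) \<subseteq> Xs i0"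
    using tri a(1) b(1) c(1) unfolding triangle_condition_def by blast
  have "K \<subseteq> (Xs a \<inter> Xs b) \<union> (Xs b \<inter> Xs c) \<union> (Xs c \<inter> Xs a)"
    using \<open>x1 \<in> Xs b \<inter> Xs c\<close> \<open>x2 \<in> Xs c \<inter> Xs a\<close> a(2) b(2) by blast
  then show ?thesis
    using i0 by blast
qed

lemma finite_clique_in_member:
  assumes tri: "triangle_condition I Xs"
    and "finite K" "card K \<ge> 2" "is_clique V (family_adj I Xs) K"
  shows "\<exists>i\<in>I. K \<subseteq> Xs i"
proof -
  obtain n where "card K = n + 2"
    using \<open>card K \<ge> 2\<close> by (metis add.commute le_Suc_ex)
  with assms(2,4) show ?thesis
  proof (induction n arbitrary: K)
    case 0
    then obtain x y where "K = {x, y}" "x \<noteq> y"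
      by (metis add_0 card_2_iff)
    with 0 have "family_adj I Xs x y"
      unfolding is_clique_def by auto
    with \<open>K = {x, y}\<close> show ?case
      unfolding family_adj_def by auto
  next
    case (Suc n)
    have IH: "\<exists>i\<in>I. K - {x} \<subseteq> Xs i" if "x \<in> K" for x
      using Suc.IH[of "K - {x}"] Suc.prems that is_clique_subset by fastforce
    obtain T where "T \<subseteq> K" "card T = 3"
      using obtain_subset_with_card_n[of 3 K] Suc.prems(3) by force
    then obtain x1 x2 x3 where "x1 \<in> K" "x2 \<in> K" "x3 \<in> K" "x1 \<noteq> x2" "x1 \<noteq> x3" "x2 \<noteq> x3"
      unfolding card_3_iff by blast
    then show ?case
      using IH member_cover_from_three_deletions[OF tri] by metis
  qed
qed

lemma maximal_clique_singleton_or_member: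
  assumes tri: "triangle_condition I Xs" and sub: "\<forall>i\<in>I. Xs i \<subseteq> X"
    and C: "is_maximal_clique X (family_adj I Xs) C" "finite C" "C \<noteq> {}"
  shows "(\<exists>x. C = {x}) \<or> (\<exists>i\<in>I. C = Xs i)"
proof (cases "card C \<ge> 2")
  case True
  have "is_clique X (family_adj I Xs) C"
    using C(1) unfolding is_maximal_clique_def by blast
  then obtain i where i: "i \<in> I" "C \<subseteq> Xs i"
    using finite_clique_in_member[OF tri C(2) True] by blast
  moreover have "is_clique X (family_adj I Xs) (Xs i)"
    using sub i(1) by (simp add: is_clique_member)
  ultimately have "Xs i = C"
    using C(1) unfolding is_maximal_clique_def by blast
  with i(1) show ?thesis
    by blast
next
  case False
  moreover have "card C \<noteq> 0"
    using C(2,3) by simp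
  ultimately have "card C = 1"
    by linarith
  then show ?thesis
    by (simp add: card_1_singleton_iff)
qed

lemma Inter_members_nonempty:
  assumes helly: "\<forall>J. finite J \<and> J \<noteq> {} \<and> J \<subseteq> I \<and> (\<forall>i\<in>J. \<forall>j\<in>J. Xs i \<inter> Xs j \<noteq> {})
                    \<longrightarrow> (\<Inter>i\<in>J. Xs i) \<noteq> {}"
    and "finite F" "F \<subseteq> Xs ` I" and meet: "\<forall>C\<in>F. \<forall>D\<in>F. C \<inter> D \<noteq> {}"
  shows "\<Inter>F \<noteq> {}"
proof -
  obtain J where J: "J \<subseteq> I" "finite J" "F = Xs ` J"
    using \<open>finite F\<close> \<open>F \<subseteq> Xs ` I\<close> finite_subset_image by metis
  have "\<forall>i\<in>J. \<forall>j\<in>J. Xs i \<inter> Xs j \<noteq> {}"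
    using J(3) meet by blast
  then have "J \<noteq> {} \<Longrightarrow> (\<Inter>i\<in>J. Xs i) \<noteq> {}"
    using helly J(1,2) by blast
  with J(3) show ?thesis
    by (cases "J = {}") simp_all
qed

theorem lemma3p3:
  fixes X :: "'a set" and I :: "'i set" and Xs :: "'i \<Rightarrow> 'a set"
  assumes sub: "\<forall>i\<in>I. Xs i \<subseteq> X"
    and no_inf_clique: "\<forall>C. is_clique X (family_adj I Xs) C \<longrightarrow> finite C"
    and helly: "\<forall>J. finite J \<and> J \<noteq> {} \<and> J \<subseteq> I \<and> (\<forall>i\<in>J. \<forall>j\<in>J. Xs i \<inter> Xs j \<noteq> {})
                  \<longrightarrow> (\<Inter>i\<in>J. Xs i) \<noteq> {}"
    and tri: "\<forall>i1\<in>I. \<forall>i2\<in>I. \<forall>i3\<in>I.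
                Xs i1 \<inter> Xs i2 \<noteq> {} \<and> Xs i2 \<inter> Xs i3 \<noteq> {} \<and> Xs i3 \<inter> Xs i1 \<noteq> {}
                \<longrightarrow> (\<exists>i0\<in>I. (Xs i1 \<inter> Xs i2) \<union> (Xs i2 \<inter> Xs i3) \<union> (Xs i3 \<inter> Xs i1) \<subseteq> Xs i0)"
  shows "finitely_clique_Helly X (family_adj I Xs)"
  unfolding finitely_clique_Helly_def
proof (intro allI impI, elim conjE)
  fix F assume "finite F" and max: "\<forall>C\<in>F. is_maximal_clique X (family_adj I Xs) C"
    and meet: "\<forall>C\<in>F. \<forall>D\<in>F. C \<inter> D \<noteq> {}"
  have tri': "triangle_condition I Xs"
    using tri unfolding triangle_condition_def .
  have shape: "(\<exists>x. C = {x}) \<or> C \<in> Xs ` I" if "C \<in> F" for C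
    using maximal_clique_singleton_or_member[OF tri' sub, of C] max meet no_inf_clique that
    unfolding is_maximal_clique_def by blast
  show "\<Inter>F \<noteq> {}"
  proof (cases "\<exists>x. {x} \<in> F")
    case True
    then show ?thesis
      using meet by blast
  next
    case False
    then have "F \<subseteq> Xs ` I"
      using shape by blast
    then show ?thesis
      using Inter_members_nonempty[OF helly \<open>finite F\<close>] meet by blast
  qed
qed

end
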